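(* Let $C\in M_n(\mathbb{C})$, $D=I-C^*C$, and define for $t\in\mathbb{R}$ $$H(t)=\tfrac12(e^{-it}C+e^{it}C^* ),\qquad K(t)=\tfrac{i}{2}(e^{it}C^*-e^{-it}C),$$ $$T_1(t,\mu)=\operatorname{tr}\bigl((\mu I-H(t))^{-1}K(t)\bigr),\qquad T_2(t,\lambda)=\operatorname{tr}\bigl((\lambda^2I-\lambda H(t)-\tfrac14 D)^{-1}\lambda K(t)\bigr),$$ regarded as rational functions of $\mu$ (resp. $\lambda$) for each $t$. Let $P_C(x,y)=\det(I-xC-yC^* )$ and $Q_C(x,y)=\det(I-xC-yC^*-xyD)$. Then: (1) $T_1\equiv0$ (for all $t$ and all $\mu$) if and only if $P_C(x,y)\in\mathbb{C}[xy]$; (2) $T_2\equiv0$ if and only if $Q_C(x,y)\in\mathbb{C}[xy]$.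
   Context: $\mathbb{C}[xy]$ denotes the set of polynomials in $x,y$ that are polynomials in the single product $xy$. *)

theory Defs
  imports "HOL-Analysis.Analysis" "HOL-Computational_Algebra.Polynomial"
begin

definition cstar :: "complex^'n^'n \<Rightarrow> complex^'n^'n" where
  "cstar C = (\<chi> i j. cnj (C $ j $ i))"

definition cscale :: "complex \<Rightarrow> complex^'n^'n \<Rightarrow> complex^'n^'n" where
  "cscale c A = (\<chi> i j. c * A $ i $ j)"

definition Dmat :: "complex^'n^'n \<Rightarrow> complex^'n^'n" where
  "Dmat C = mat 1 - cstar C ** C"

definition Hmat :: "complex^'n^'n \<Rightarrow> real \<Rightarrow> complex^'n^'n" where
  "Hmat C t = cscale (1/2) (cscale (exp (- \<i> * of_real t)) C + cscale (exp (\<i> * of_real t)) (cstar C))"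

definition Kmat :: "complex^'n^'n \<Rightarrow> real \<Rightarrow> complex^'n^'n" where
  "Kmat C t = cscale (\<i>/2) (cscale (exp (\<i> * of_real t)) (cstar C) - cscale (exp (- \<i> * of_real t)) C)"

text \<open>T_1(t,mu) and T_2(t,lambda); meaningful where the matrix to be inverted is invertible.\<close>
definition T1 :: "complex^'n^'n \<Rightarrow> real \<Rightarrow> complex \<Rightarrow> complex" where
  "T1 C t \<mu> = trace (matrix_inv (cscale \<mu> (mat 1) - Hmat C t) ** Kmat C t)"

definition M2 :: "complex^'n^'n \<Rightarrow> real \<Rightarrow> complex \<Rightarrow> complex^'n^'n" where
  "M2 C t l = cscale (l^2) (mat 1) - cscale l (Hmat C t) - cscale (1/4) (Dmat C)"

definition T2 :: "complex^'n^'n \<Rightarrow> real \<Rightarrow> complex \<Rightarrow> complex" where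
  "T2 C t l = trace (matrix_inv (M2 C t l) ** cscale l (Kmat C t))"

definition PC :: "complex^'n^'n \<Rightarrow> complex \<Rightarrow> complex \<Rightarrow> complex" where
  "PC C x y = det (mat 1 - cscale x C - cscale y (cstar C))"

definition QC :: "complex^'n^'n \<Rightarrow> complex \<Rightarrow> complex \<Rightarrow> complex" where
  "QC C x y = det (mat 1 - cscale x C - cscale y (cstar C) - cscale (x*y) (Dmat C))"

definition in_Cxy :: "(complex \<Rightarrow> complex \<Rightarrow> complex) \<Rightarrow> bool" where
  "in_Cxy F \<longleftrightarrow> (\<exists>p :: complex poly. \<forall>x y. F x y = poly p (x * y))"

end

theory Submission
  imports Defs "HOL-Complex_Analysis.Complex_Analysis"
begin

text \<open>
  Extend \<open>H\<close> and \<open>K\<close> to complex \<open>t\<close>; then \<open>H' = K\<close>, so by Jacobi's formula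
  \<open>tr ((\<mu> - H t)\<^sup>-\<^sup>1 K t)\<close> is minus the logarithmic derivative of the entire function
  \<open>t \<mapsto> det (\<mu> - H t)\<close>. Its vanishing at the real points where the inverse exists forces
  this function to be constant, by the identity theorem. Since
  \<open>\<mu> - H t = \<mu> (I - x C - y C\<^sup>*)\<close> with \<open>x = e\<^sup>-\<^sup>i\<^sup>t/(2\<mu>)\<close>, \<open>y = e\<^sup>i\<^sup>t/(2\<mu>)\<close>,
  constancy for every \<open>\<mu>\<close> says that \<open>P\<^sub>C\<close> is invariant under \<open>(x, y) \<mapsto> (w x, y / w)\<close>
  for \<open>w \<noteq> 0\<close>, which for a polynomial means \<open>P\<^sub>C \<in> \<complex>[xy]\<close>.
  The same argument applies to \<open>T\<^sub>2\<close> and \<open>Q\<^sub>C\<close> via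
  \<open>\<lambda>\<^sup>2 - \<lambda> H t - D/4 = \<lambda>\<^sup>2 (I - x C - y C\<^sup>* - x y D)\<close> with \<open>x, y\<close> as above for \<open>\<mu> = \<lambda>\<close>.
\<close>

lemma matrix_inv_left:
  fixes A :: "'a::semiring_1^'n^'m"
  assumes "invertible A"
  shows "matrix_inv A ** A = mat 1"
  using someI_ex[OF assms[unfolded invertible_def]] unfolding matrix_inv_def by auto

lemma trace_mult_uminus_right:
  fixes A B :: "'a::comm_ring_1^'n^'n"
  shows "trace (A ** - B) = - trace (A ** B)"
  by (simp add: trace_def matrix_matrix_mult_def sum_negf)

lemma det_cscale:
  fixes A :: "complex^'n^'n"
  shows "det (cscale c A) = c ^ CARD('n) * det A"
  by (simp add: det_def cscale_def prod.distrib sum_distrib_left prod_constant algebra_simps)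

lemma det_add_cscale_poly:
  fixes A B :: "complex^'n^'n"
  shows "\<exists>q. \<forall>u. det (A + cscale u B) = poly q u"
proof
  let ?q = "\<Sum>p\<in>{p. p permutes (UNIV::'n set)}. [:of_int (sign p):] * (\<Prod>i\<in>UNIV. [:A$i$p i, B$i$p i:])"
  show "\<forall>u. det (A + cscale u B) = poly ?q u"
    by (simp add: det_def poly_sum poly_prod cscale_def algebra_simps)
qed

lemma has_field_derivative_det:
  fixes M :: "'a::real_normed_field \<Rightarrow> 'a^'n^'n"
  assumes deriv: "\<And>i j. ((\<lambda>z. M z $ i $ j) has_field_derivative M' $ i $ j) (at z)"
    and inv: "invertible (M z)"
  shows "((\<lambda>z. det (M z)) has_field_derivative det (M z) * trace (matrix_inv (M z) ** M')) (at z)"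
proof -
  define P where "P = {p. p permutes (UNIV :: 'n set)}"
  define R where "R j = (\<chi> i. if i = j then row j M' else row i (M z))" for j
  define N where "N = M' ** matrix_inv (M z)"
  have "((\<lambda>z. det (M z)) has_field_derivative
      (\<Sum>p\<in>P. of_int (sign p) * (\<Sum>j\<in>UNIV. M' $ j $ p j * (\<Prod>i\<in>UNIV-{j}. M z $ i $ p i)))) (at z)"
    unfolding det_def P_def by (intro DERIV_sum DERIV_cmult has_field_derivative_prod deriv)
  also have "(\<Sum>p\<in>P. of_int (sign p) * (\<Sum>j\<in>UNIV. M' $ j $ p j * (\<Prod>i\<in>UNIV-{j}. M z $ i $ p i)))
      = (\<Sum>j\<in>UNIV. det (R j))"
  proof -
    have "(\<Prod>i\<in>UNIV. R j $ i $ p i) = M' $ j $ p j * (\<Prod>i\<in>UNIV-{j}. M z $ i $ p i)" for j p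
      by (subst prod.remove[of _ j]) (auto simp: R_def row_def intro!: prod.cong)
    then show ?thesis
      unfolding det_def P_def by (simp add: sum_distrib_left) (rule sum.swap)
  qed
  also have "(\<Sum>j\<in>UNIV. det (R j)) = (\<Sum>j\<in>UNIV. N $ j $ j * det (M z))"
  proof (rule sum.cong)
    fix j
    have "M' = N ** M z"
      unfolding N_def by (simp add: matrix_mul_assoc[symmetric] matrix_inv_left[OF inv])
    then have "row j M' = (\<Sum>i\<in>UNIV. row j N $ i *s row i (M z))"
      by (simp add: vec_eq_iff row_def matrix_matrix_mult_def sum_component)
    then have "det (R j) = row j N $ j * det (M z)"
      unfolding R_def by (simp only: cramer_lemma_transpose)
    then show "det (R j) = N $ j $ j * det (M z)"
      by (simp add: row_def)
  qed simp
  also have "\<dots> = det (M z) * trace (matrix_inv (M z) ** M')"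
    unfolding trace_mul_sym[of "matrix_inv (M z)"] N_def[symmetric]
    by (simp add: trace_def sum_distrib_left mult.commute)
  finally show ?thesis .
qed

lemma holomorphic_on_det:
  fixes M :: "complex \<Rightarrow> complex^'n^'n"
  assumes "\<And>i j. (\<lambda>z. M z $ i $ j) holomorphic_on S"
  shows "(\<lambda>z. det (M z)) holomorphic_on S"
  unfolding det_def by (intro holomorphic_intros assms)

lemma poly_eq_if_agree_off_point:
  fixes p q :: "'a::{idom,ring_char_0} poly"
  assumes "\<And>x. x \<noteq> a \<Longrightarrow> poly p x = poly q x"
  shows "p = q"
proof -
  have "UNIV - {a} \<subseteq> {x. poly (p - q) x = 0}"
    using assms by auto
  then have "infinite {x. poly (p - q) x = 0}"
    using infinite_UNIV_char_0 finite_subset by fastforce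
  then show ?thesis
    using poly_roots_finite[of "p - q"] by auto
qed

lemma det_shift_eq_if_eq_off_zero:
  fixes A B :: "complex^'n^'n"
  assumes "\<And>\<mu>. \<mu> \<noteq> 0 \<Longrightarrow> det (cscale \<mu> (mat 1) - A) = det (cscale \<mu> (mat 1) - B)"
  shows "det (cscale \<mu> (mat 1) - A) = det (cscale \<mu> (mat 1) - B)"
proof -
  have charpoly: "\<exists>p. \<forall>\<mu>. det (cscale \<mu> (mat 1) - M) = poly p \<mu>" for M :: "complex^'n^'n"
  proof -
    have "cscale \<mu> (mat 1) - M = - M + cscale \<mu> (mat 1)" for \<mu>
      by (simp add: algebra_simps)
    then show ?thesis
      using det_add_cscale_poly[of "- M" "mat 1"] by simp
  qed
  obtain p q where p: "\<And>\<mu>. det (cscale \<mu> (mat 1) - A) = poly p \<mu>"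
    and q: "\<And>\<mu>. det (cscale \<mu> (mat 1) - B) = poly q \<mu>"
    using charpoly by meson
  have "p = q"
    by (rule poly_eq_if_agree_off_point[of 0]) (use assms in \<open>simp add: p q\<close>)
  then show ?thesis
    by (simp add: p q)
qed

lemma islimpt_range_of_real: "(of_real x :: complex) islimpt range of_real"
proof (rule islimpt_approachable[THEN iffD2], intro allI impI)
  fix d :: real
  assume "d > 0"
  show "\<exists>w\<in>range of_real. w \<noteq> of_real x \<and> dist w (of_real x :: complex) < d"
    using \<open>d > 0\<close>
    by (intro bexI[OF _ rangeI[of "of_real :: real \<Rightarrow> complex" "x + d/2"]])
       (auto simp: dist_norm simp flip: of_real_diff)
qed

lemma entire_constant_if_mult_deriv_vanishes_on_reals:
  fixes \<phi> :: "complex \<Rightarrow> complex"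
  assumes holo: "\<phi> holomorphic_on UNIV"
    and real_zero: "\<And>t::real. \<phi> t * deriv \<phi> t = 0"
  shows "\<phi> z = \<phi> w"
proof (cases "\<forall>z. \<phi> z = 0")
  case False
  then obtain z0 where "\<phi> z0 \<noteq> 0" by blast
  have mult_deriv_zero: "\<phi> z * deriv \<phi> z = 0" for z
    by (rule analytic_continuation[of _ UNIV "range of_real" 0])
       (use holo real_zero islimpt_range_of_real[of 0] in \<open>auto intro!: holomorphic_intros holomorphic_deriv\<close>)
  have "open {z. \<phi> z \<noteq> 0}"
    using holo by (intro open_Collect_neq holomorphic_on_imp_continuous_on continuous_on_const)
  have "deriv \<phi> z = 0" for z
  proof (rule analytic_continuation_open[of "{z. \<phi> z \<noteq> 0}" UNIV "deriv \<phi>" "\<lambda>_. 0"])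
    show "deriv \<phi> holomorphic_on UNIV"
      using holo by (rule holomorphic_deriv) simp
  qed (use \<open>\<phi> z0 \<noteq> 0\<close> \<open>open {z. \<phi> z \<noteq> 0}\<close> mult_deriv_zero in auto)
  then show ?thesis
    using has_field_derivative_zero_constant[of UNIV \<phi>] holomorphic_derivI[OF holo] by force
qed simp

lemma trace_log_deriv_vanishes_on_reals_iff_det_constant:
  fixes M M' :: "complex \<Rightarrow> complex^'n^'n"
  assumes deriv: "\<And>z i j. ((\<lambda>z. M z $ i $ j) has_field_derivative M' z $ i $ j) (at z)"
  shows "(\<forall>t::real. invertible (M t) \<longrightarrow> trace (matrix_inv (M t) ** M' t) = 0)
     \<longleftrightarrow> (\<forall>z. det (M z) = det (M 0))"
proof
  assume trace_zero: "\<forall>t::real. invertible (M t) \<longrightarrow> trace (matrix_inv (M t) ** M' t) = 0"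
  have "(\<lambda>z. det (M z)) holomorphic_on UNIV"
    using deriv by (intro holomorphic_on_det) (auto simp: holomorphic_on_open)
  moreover have "det (M t) * deriv (\<lambda>z. det (M z)) t = 0" for t :: real
  proof (cases "invertible (M t)")
    case True
    then have "((\<lambda>z. det (M z)) has_field_derivative 0) (at t)"
      using has_field_derivative_det[OF deriv True] trace_zero by simp
    then show ?thesis by (simp add: DERIV_imp_deriv)
  qed (simp add: invertible_det_nz)
  ultimately show "\<forall>z. det (M z) = det (M 0)"
    using entire_constant_if_mult_deriv_vanishes_on_reals by blast
next
  assume const: "\<forall>z. det (M z) = det (M 0)"
  show "\<forall>t::real. invertible (M t) \<longrightarrow> trace (matrix_inv (M t) ** M' t) = 0"
  proof (intro allI impI)
    fix t :: real
    assume inv: "invertible (M t)"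
    have "(\<lambda>z. det (M z)) = (\<lambda>_. det (M 0))"
      using const by blast
    then have "((\<lambda>z. det (M z)) has_field_derivative 0) (at t)"
      by (simp add: DERIV_const)
    then have "det (M t) * trace (matrix_inv (M t) ** M' t) = 0"
      using DERIV_unique has_field_derivative_det[OF deriv inv] by blast
    then show "trace (matrix_inv (M t) ** M' t) = 0"
      using inv by (simp add: invertible_det_nz)
  qed
qed

definition separately_polynomial :: "('a::comm_semiring_0 \<Rightarrow> 'a \<Rightarrow> 'a) \<Rightarrow> bool" where
  "separately_polynomial F \<longleftrightarrow> (\<forall>x. \<exists>q. \<forall>y. F x y = poly q y) \<and> (\<forall>y. \<exists>q. \<forall>x. F x y = poly q x)"

lemma separately_polynomial_eq_poly_mult:
  fixes F :: "'a::{idom,ring_char_0} \<Rightarrow> 'a \<Rightarrow> 'a"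
  assumes sep: "separately_polynomial F"
    and off_axes: "\<And>x y. x \<noteq> 0 \<Longrightarrow> y \<noteq> 0 \<Longrightarrow> F x y = poly p (x * y)"
  shows "F x y = poly p (x * y)"
proof -
  have off_x_axis: "F x y = poly p (x * y)" if "y \<noteq> 0" for x y
  proof -
    obtain q where q: "\<And>x. F x y = poly q x"
      using sep unfolding separately_polynomial_def by blast
    have "poly q x = poly (p \<circ>\<^sub>p [:0, y:]) x" if "x \<noteq> 0" for x
      using q[of x] off_axes[OF that \<open>y \<noteq> 0\<close>] by (simp add: poly_pcompose mult.commute)
    then have "q = p \<circ>\<^sub>p [:0, y:]"
      by (rule poly_eq_if_agree_off_point)
    then show ?thesis
      using q by (simp add: poly_pcompose mult.commute)
  qed
  obtain q where q: "\<And>y. F x y = poly q y"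
    using sep unfolding separately_polynomial_def by blast
  have "poly q y = poly (p \<circ>\<^sub>p [:0, x:]) y" if "y \<noteq> 0" for y
    using q[of y] off_x_axis[OF that] by (simp add: poly_pcompose mult.commute)
  then have "q = p \<circ>\<^sub>p [:0, x:]"
    by (rule poly_eq_if_agree_off_point)
  then show ?thesis
    using q by (simp add: poly_pcompose mult.commute)
qed

lemma exp_orbit_product: "exp (- \<i> * z) * a * (exp (\<i> * z) * a) = a * a"
proof -
  have "exp (- \<i> * z) * a * (exp (\<i> * z) * a) = exp (\<i> * z) * exp (- (\<i> * z)) * (a * a)"
    by (simp add: mult_ac)
  then show ?thesis
    by (simp add: exp_minus_inverse)
qed

lemma in_Cxy_iff_exp_invariant:
  assumes sep: "separately_polynomial F"
  shows "in_Cxy F \<longleftrightarrow> (\<forall>a z. F (exp (- \<i> * z) * a) (exp (\<i> * z) * a) = F a a)"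
proof
  assume "in_Cxy F"
  then obtain p where "\<And>x y. F x y = poly p (x * y)"
    unfolding in_Cxy_def by blast
  then show "\<forall>a z. F (exp (- \<i> * z) * a) (exp (\<i> * z) * a) = F a a"
    by (simp only: exp_orbit_product simp_thms)
next
  assume inv: "\<forall>a z. F (exp (- \<i> * z) * a) (exp (\<i> * z) * a) = F a a"
  have balance: "F x y = F s s" if "x * y = s * s" "x \<noteq> 0" "s \<noteq> 0" for x y s
  proof -
    define z where "z = \<i> * ln (x / s)"
    have "exp (- \<i> * z) * s = x" "exp (\<i> * z) * s = y"
      using that by (simp_all add: z_def exp_minus field_simps)
    then show ?thesis
      using inv by metis
  qed
  obtain p where p: "\<And>u. F 1 u = poly p u"
    using sep unfolding separately_polynomial_def by blast
  have "F x y = poly p (x * y)" if "x \<noteq> 0" "y \<noteq> 0" for x y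
  proof -
    define s where "s = csqrt (x * y)"
    have "s * s = x * y" "s \<noteq> 0"
      using that by (simp_all add: s_def flip: power2_eq_square)
    then show ?thesis
      using balance[of x y s] balance[of 1 "x * y" s] that p by simp
  qed
  then show "in_Cxy F"
    unfolding in_Cxy_def using separately_polynomial_eq_poly_mult[OF sep] by blast
qed

definition Hcomplex :: "complex^'n^'n \<Rightarrow> complex \<Rightarrow> complex^'n^'n" where
  "Hcomplex C z = cscale (1/2) (cscale (exp (- \<i> * z)) C + cscale (exp (\<i> * z)) (cstar C))"

definition Kcomplex :: "complex^'n^'n \<Rightarrow> complex \<Rightarrow> complex^'n^'n" where
  "Kcomplex C z = cscale (\<i>/2) (cscale (exp (\<i> * z)) (cstar C) - cscale (exp (- \<i> * z)) C)"

definition M2complex :: "complex^'n^'n \<Rightarrow> complex \<Rightarrow> complex \<Rightarrow> complex^'n^'n" where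
  "M2complex C z l = cscale (l^2) (mat 1) - cscale l (Hcomplex C z) - cscale (1/4) (Dmat C)"

lemma Hmat_eq_Hcomplex: "Hmat C t = Hcomplex C (of_real t)"
  by (simp add: Hmat_def Hcomplex_def)

lemma Kmat_eq_Kcomplex: "Kmat C t = Kcomplex C (of_real t)"
  by (simp add: Kmat_def Kcomplex_def)

lemma M2_eq_M2complex: "M2 C t l = M2complex C (of_real t) l"
  by (simp add: M2_def M2complex_def Hmat_eq_Hcomplex)

lemma has_field_derivative_Hcomplex:
  "((\<lambda>z. Hcomplex C z $ i $ j) has_field_derivative Kcomplex C z $ i $ j) (at z)"
  unfolding Hcomplex_def Kcomplex_def cscale_def
  by (auto intro!: derivative_eq_intros simp: algebra_simps)

lemma has_field_derivative_shift_Hcomplex: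
  "((\<lambda>z. (cscale \<mu> (mat 1) - Hcomplex C z) $ i $ j) has_field_derivative (- Kcomplex C z) $ i $ j)
    (at z)"
  using has_field_derivative_Hcomplex[of C i j z]
  by (auto intro!: derivative_eq_intros simp: cscale_def)

lemma has_field_derivative_M2complex:
  "((\<lambda>z. M2complex C z l $ i $ j) has_field_derivative (- cscale l (Kcomplex C z)) $ i $ j) (at z)"
  using has_field_derivative_Hcomplex[of C i j z]
  by (auto intro!: derivative_eq_intros simp: M2complex_def cscale_def)

lemma det_shift_Hcomplex:
  fixes C :: "complex^'n^'n"
  assumes "a \<noteq> 0"
  shows "det (cscale (1/(2*a)) (mat 1) - Hcomplex C z)
    = (1/(2*a)) ^ CARD('n) * PC C (exp (- \<i> * z) * a) (exp (\<i> * z) * a)"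
proof -
  have "cscale (1/(2*a)) (mat 1) - Hcomplex C z
      = cscale (1/(2*a)) (mat 1 - cscale (exp (- \<i> * z) * a) C - cscale (exp (\<i> * z) * a) (cstar C))"
    using assms by (simp add: vec_eq_iff cscale_def Hcomplex_def mat_def field_simps)
  then show ?thesis
    by (simp add: PC_def det_cscale)
qed

lemma det_M2complex:
  fixes C :: "complex^'n^'n"
  assumes "a \<noteq> 0"
  shows "det (M2complex C z (1/(2*a)))
    = ((1/(2*a))^2) ^ CARD('n) * QC C (exp (- \<i> * z) * a) (exp (\<i> * z) * a)"
proof -
  have "M2complex C z (1/(2*a)) = cscale ((1/(2*a))^2) (mat 1 - cscale (exp (- \<i> * z) * a) C
      - cscale (exp (\<i> * z) * a) (cstar C) - cscale (a * a) (Dmat C))"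
    using assms
    by (simp add: vec_eq_iff cscale_def M2complex_def Hcomplex_def mat_def field_simps power2_eq_square)
  then show ?thesis
    unfolding QC_def exp_orbit_product by (simp add: det_cscale)
qed

lemma separately_polynomial_PC: "separately_polynomial (PC C)"
  unfolding separately_polynomial_def PC_def
proof (intro conjI allI)
  fix x :: complex
  have split: "mat 1 - cscale x C - cscale y (cstar C) = (mat 1 - cscale x C) + cscale y (- cstar C)"
    for y
    by (simp add: vec_eq_iff cscale_def)
  show "\<exists>q. \<forall>y. det (mat 1 - cscale x C - cscale y (cstar C)) = poly q y"
    unfolding split by (rule det_add_cscale_poly)
next
  fix y :: complex
  have split: "mat 1 - cscale x C - cscale y (cstar C) = (mat 1 - cscale y (cstar C)) + cscale x (- C)"
    for x
    by (simp add: vec_eq_iff cscale_def)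
  show "\<exists>q. \<forall>x. det (mat 1 - cscale x C - cscale y (cstar C)) = poly q x"
    unfolding split by (rule det_add_cscale_poly)
qed

lemma separately_polynomial_QC: "separately_polynomial (QC C)"
  unfolding separately_polynomial_def QC_def
proof (intro conjI allI)
  fix x :: complex
  have split: "mat 1 - cscale x C - cscale y (cstar C) - cscale (x * y) (Dmat C)
      = (mat 1 - cscale x C) + cscale y (- cstar C - cscale x (Dmat C))" for y
    by (simp add: vec_eq_iff cscale_def algebra_simps)
  show "\<exists>q. \<forall>y. det (mat 1 - cscale x C - cscale y (cstar C) - cscale (x * y) (Dmat C))
    = poly q y"
    unfolding split by (rule det_add_cscale_poly)
next
  fix y :: complex
  have split: "mat 1 - cscale x C - cscale y (cstar C) - cscale (x * y) (Dmat C)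
      = (mat 1 - cscale y (cstar C)) + cscale x (- C - cscale y (Dmat C))" for x
    by (simp add: vec_eq_iff cscale_def algebra_simps)
  show "\<exists>q. \<forall>x. det (mat 1 - cscale x C - cscale y (cstar C) - cscale (x * y) (Dmat C))
    = poly q x"
    unfolding split by (rule det_add_cscale_poly)
qed

lemma T1_vanishes_iff_det_shift_Hcomplex_constant:
  "(\<forall>t \<mu>. invertible (cscale \<mu> (mat 1) - Hmat C t) \<longrightarrow> T1 C t \<mu> = 0)
    \<longleftrightarrow> (\<forall>\<mu> z. det (cscale \<mu> (mat 1) - Hcomplex C z) = det (cscale \<mu> (mat 1) - Hcomplex C 0))"
proof -
  have "T1 C t \<mu> = - trace (matrix_inv (cscale \<mu> (mat 1) - Hcomplex C t) ** - Kcomplex C t)" for t \<mu>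
    by (simp add: T1_def Hmat_eq_Hcomplex Kmat_eq_Kcomplex trace_mult_uminus_right)
  then show ?thesis
    using trace_log_deriv_vanishes_on_reals_iff_det_constant[OF has_field_derivative_shift_Hcomplex]
    by (simp add: Hmat_eq_Hcomplex) blast
qed

lemma det_shift_Hcomplex_constant_iff_PC_exp_invariant:
  "(\<forall>\<mu> z. det (cscale \<mu> (mat 1) - Hcomplex C z) = det (cscale \<mu> (mat 1) - Hcomplex C 0))
    \<longleftrightarrow> (\<forall>a z. PC C (exp (- \<i> * z) * a) (exp (\<i> * z) * a) = PC C a a)"
proof
  assume const:
    "\<forall>\<mu> z. det (cscale \<mu> (mat 1) - Hcomplex C z) = det (cscale \<mu> (mat 1) - Hcomplex C 0)"
  show "\<forall>a z. PC C (exp (- \<i> * z) * a) (exp (\<i> * z) * a) = PC C a a"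
  proof (intro allI)
    fix a z
    show "PC C (exp (- \<i> * z) * a) (exp (\<i> * z) * a) = PC C a a"
    proof (cases "a = 0")
      case False
      then show ?thesis
        using const[rule_format, of "1 / (2 * a)"]
          det_shift_Hcomplex[OF False, of C z] det_shift_Hcomplex[OF False, of C 0]
        by simp
    qed simp
  qed
next
  assume inv: "\<forall>a z. PC C (exp (- \<i> * z) * a) (exp (\<i> * z) * a) = PC C a a"
  have "det (cscale \<mu> (mat 1) - Hcomplex C z) = det (cscale \<mu> (mat 1) - Hcomplex C 0)"
    if "\<mu> \<noteq> 0" for \<mu> z
  proof -
    define a where "a = 1 / (2 * \<mu>)"
    have "a \<noteq> 0" "\<mu> = 1 / (2 * a)"
      using that by (simp_all add: a_def)
    then show ?thesis
      using det_shift_Hcomplex[of a C z] det_shift_Hcomplex[of a C 0] inv by simp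
  qed
  then show "\<forall>\<mu> z. det (cscale \<mu> (mat 1) - Hcomplex C z) = det (cscale \<mu> (mat 1) - Hcomplex C 0)"
    using det_shift_eq_if_eq_off_zero by blast
qed

lemma T2_vanishes_iff_det_M2complex_constant:
  "(\<forall>t l. invertible (M2 C t l) \<longrightarrow> T2 C t l = 0)
    \<longleftrightarrow> (\<forall>l z. det (M2complex C z l) = det (M2complex C 0 l))"
proof -
  have "T2 C t l = - trace (matrix_inv (M2complex C t l) ** - cscale l (Kcomplex C t))" for t l
    by (simp add: T2_def M2_eq_M2complex Kmat_eq_Kcomplex trace_mult_uminus_right)
  then show ?thesis
    using trace_log_deriv_vanishes_on_reals_iff_det_constant[OF has_field_derivative_M2complex]
    by (simp add: M2_eq_M2complex) blast
qed

lemma det_M2complex_constant_iff_QC_exp_invariant: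
  "(\<forall>l z. det (M2complex C z l) = det (M2complex C 0 l))
    \<longleftrightarrow> (\<forall>a z. QC C (exp (- \<i> * z) * a) (exp (\<i> * z) * a) = QC C a a)"
proof
  assume const: "\<forall>l z. det (M2complex C z l) = det (M2complex C 0 l)"
  show "\<forall>a z. QC C (exp (- \<i> * z) * a) (exp (\<i> * z) * a) = QC C a a"
  proof (intro allI)
    fix a z
    show "QC C (exp (- \<i> * z) * a) (exp (\<i> * z) * a) = QC C a a"
    proof (cases "a = 0")
      case False
      then show ?thesis
        using const[rule_format, where l="1 / (2 * a)"]
          det_M2complex[OF False, of C z] det_M2complex[OF False, of C 0]
        by simp
    qed simp
  qed
next
  assume inv: "\<forall>a z. QC C (exp (- \<i> * z) * a) (exp (\<i> * z) * a) = QC C a a"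
  show "\<forall>l z. det (M2complex C z l) = det (M2complex C 0 l)"
  proof (intro allI)
    fix l z
    show "det (M2complex C z l) = det (M2complex C 0 l)"
    proof (cases "l = 0")
      case False
      define a where "a = 1 / (2 * l)"
      have "a \<noteq> 0" "l = 1 / (2 * a)"
        using False by (simp_all add: a_def)
      then show ?thesis
        using det_M2complex[of a C z] det_M2complex[of a C 0] inv by simp
    qed (simp add: M2complex_def cscale_def)
  qed
qed

theorem mainTheorem9:
  fixes C :: "complex^'n^'n"
  shows "((\<forall>t \<mu>. invertible (cscale \<mu> (mat 1) - Hmat C t) \<longrightarrow> T1 C t \<mu> = 0) \<longleftrightarrow> in_Cxy (PC C))
       \<and> ((\<forall>t l. invertible (M2 C t l) \<longrightarrow> T2 C t l = 0) \<longleftrightarrow> in_Cxy (QC C))"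
  by (simp only:
      T1_vanishes_iff_det_shift_Hcomplex_constant det_shift_Hcomplex_constant_iff_PC_exp_invariant
      in_Cxy_iff_exp_invariant[OF separately_polynomial_PC]
      T2_vanishes_iff_det_M2complex_constant det_M2complex_constant_iff_QC_exp_invariant
      in_Cxy_iff_exp_invariant[OF separately_polynomial_QC] simp_thms)

end
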